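(* Let $f$ be a positive definite function and let $W=\{w_1,\dots,w_N\}\subset V$ be a norming set for $\mathcal{B}_M$. Then for every signal $x\in\mathcal{L}(G)$ its GBF interpolant $\mathrm{I}_W x$ satisfies $$\max_{v\in V}|x(v)-\mathrm{I}_W x(v)|\le\big(1+\|(\mathbf{S}_W\mathbf{B}_M)^{-1}\|\big)\Big(\sum_{k=M+1}^n\hat{f}_k\Big)^{1/2}\|x\|_{K_f}.$$
   Context: Let $G$ be a graph with vertex set $V=\{v_1,\dots,v_n\}$, symmetric non-negative weighted adjacency matrix $\mathbf{A}$, degree matrix $\mathbf{D}=\mathrm{diag}(\sum_k\mathbf{A}_{ik})$ (positive), and normalized Laplacian $\mathbf{L}=\mathbf{I}_n-\mathbf{D}^{-1/2}\mathbf{A}\mathbf{D}^{-1/2}$. Signals are vectors in $\mathcal{L}(G)\cong\mathbb{R}^n$ with euclidean norm and standard basis $e_1,\dots,e_n$. Fix an orthonormal eigendecomposition $\mathbf{L}=\mathbf{U}\,\mathrm{diag}(\lambda_1,\dots,\lambda_n)\mathbf{U}^\intercal$, $\lambda_1\le\dots\le\lambda_n$, with columns $u_1,\dots,u_n$. Fourier transform $\hat{x}=\mathbf{U}^\intercal x$; convolution operator $\mathbf{C}_x=\mathbf{U}\,\mathrm{diag}(\hat{x})\mathbf{U}^\intercal$. For $f\in\mathcal{L}(G)$ let $(\mathbf{K}_f)_{ij}=(\mathbf{C}_{e_j}f)(v_i)$; $f$ is a positive definite function if $\mathbf{K}_f$ is symmetric strictly positive definite; then $\|x\|_{K_f}=\sqrt{x^\intercal\mathbf{K}_f^{-1}x}$.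 For distinct nodes $w_k=v_{j_k}$, $k=1,\dots,N$, let $\mathbf{K}_{f,W}\in\mathbb{R}^{N\times N}$ have entries $(\mathbf{K}_{f,W})_{kl}=(\mathbf{C}_{e_{j_l}}f)(w_k)$ (invertible); the GBF interpolant is $\mathrm{I}_W x=\sum_{k=1}^N c_k\mathbf{C}_{e_{j_k}}f$ where $c$ solves $\mathbf{K}_{f,W}c=(x(w_1),\dots,x(w_N))^\intercal$. Let $\mathcal{B}_M=\mathrm{span}\{u_1,\dots,u_M\}$, $\mathbf{S}_W x(v)=x(v)$ for $v\in W$ and $0$ otherwise, $\mathbf{B}_M x=\sum_{k=1}^M(u_k^\intercal x)u_k$. $W$ is a norming set for $\mathcal{B}_M$ if $\mathbf{S}_W\mathbf{B}_M$ is injective on $\mathcal{B}_M$; $\|(\mathbf{S}_W\mathbf{B}_M)^{-1}\|$ is the operator norm of the inverse of $\mathbf{S}_W\mathbf{B}_M|_{\mathcal{B}_M}$ on its image $\mathbf{S}_W(\mathcal{B}_M)$ with respect to the euclidean norm. *)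

theory Defs
  imports "HOL-Analysis.Analysis"
begin

text \<open>Vertices of the graph are the elements of a finite type 'n; n = CARD('n).  Eigenvectors/eigenvalues are indexed by
  k < CARD('n) (0-based, i.e. k corresponds to u_(k+1) of the paper).\<close>

definition degree :: "real^'n^'n \<Rightarrow> 'n::finite \<Rightarrow> real" where
  "degree A i = (\<Sum>k\<in>UNIV. A $ i $ k)"

definition norm_laplacian :: "real^'n^'n \<Rightarrow> real^'n::finite^'n" where
  "norm_laplacian A = (\<chi> i j. (if i = j then 1 else 0)
        - A $ i $ j / (sqrt (degree A i) * sqrt (degree A j)))"

definition graph_eigensystem ::
    "real^'n^'n \<Rightarrow> (nat \<Rightarrow> real^'n::finite) \<Rightarrow> (nat \<Rightarrow> real) \<Rightarrow> bool" where
  "graph_eigensystem A u lam \<longleftrightarrow>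
     transpose A = A \<and> (\<forall>i j. 0 \<le> A $ i $ j) \<and> (\<forall>i. 0 < degree A i) \<and>
     (\<forall>k<CARD('n). \<forall>l<CARD('n). u k \<bullet> u l = (if k = l then 1 else 0)) \<and>
     (\<forall>k<CARD('n). norm_laplacian A *v u k = lam k *\<^sub>R u k) \<and>
     (\<forall>k l. k \<le> l \<longrightarrow> l < CARD('n) \<longrightarrow> lam k \<le> lam l)"

definition gft :: "(nat \<Rightarrow> real^'n::finite) \<Rightarrow> real^'n \<Rightarrow> nat \<Rightarrow> real" where
  "gft u x k = u k \<bullet> x"

definition conv :: "(nat \<Rightarrow> real^'n::finite) \<Rightarrow> real^'n \<Rightarrow> real^'n \<Rightarrow> real^'n" where
  "conv u x y = (\<Sum>k<CARD('n). (gft u x k * gft u y k) *\<^sub>R u k)"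

definition kernel_mat :: "(nat \<Rightarrow> real^'n::finite) \<Rightarrow> real^'n \<Rightarrow> real^'n^'n" where
  "kernel_mat u f = (\<chi> i j. conv u (axis j 1) f $ i)"

definition pos_def_fun :: "(nat \<Rightarrow> real^'n::finite) \<Rightarrow> real^'n \<Rightarrow> bool" where
  "pos_def_fun u f \<longleftrightarrow> transpose (kernel_mat u f) = kernel_mat u f \<and>
     (\<forall>x. x \<noteq> 0 \<longrightarrow> 0 < x \<bullet> (kernel_mat u f *v x))"

definition native_norm :: "(nat \<Rightarrow> real^'n::finite) \<Rightarrow> real^'n \<Rightarrow> real^'n \<Rightarrow> real" where
  "native_norm u f x = sqrt (x \<bullet> (matrix_inv (kernel_mat u f) *v x))"

text \<open>GBF interpolation: coefficients c (indexed by the nodes of W, zero outside W)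
  solving K_(f,W) c = x|_W, and the interpolant  sum_(w in W) c_w C_(e_w) f.\<close>
definition gbf_coeffs ::
    "(nat \<Rightarrow> real^'n::finite) \<Rightarrow> real^'n \<Rightarrow> 'n set \<Rightarrow> real^'n \<Rightarrow> 'n \<Rightarrow> real" where
  "gbf_coeffs u f W x = (THE c. (\<forall>v. v \<notin> W \<longrightarrow> c v = 0) \<and>
      (\<forall>w'\<in>W. (\<Sum>w\<in>W. c w * conv u (axis w 1) f $ w') = x $ w'))"

definition gbf_interp ::
    "(nat \<Rightarrow> real^'n::finite) \<Rightarrow> real^'n \<Rightarrow> 'n set \<Rightarrow> real^'n \<Rightarrow> real^'n" where
  "gbf_interp u f W x = (\<Sum>w\<in>W. gbf_coeffs u f W x w *\<^sub>R conv u (axis w 1) f)"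

definition bl_space :: "(nat \<Rightarrow> real^'n::finite) \<Rightarrow> nat \<Rightarrow> (real^'n) set" where
  "bl_space u M = span (u ` {..<M})"

definition bl_proj :: "(nat \<Rightarrow> real^'n::finite) \<Rightarrow> nat \<Rightarrow> real^'n \<Rightarrow> real^'n" where
  "bl_proj u M x = (\<Sum>k<M. (u k \<bullet> x) *\<^sub>R u k)"

definition sampling :: "'n::finite set \<Rightarrow> real^'n \<Rightarrow> real^'n" where
  "sampling W x = (\<chi> v. if v \<in> W then x $ v else 0)"

definition norming_set :: "(nat \<Rightarrow> real^'n::finite) \<Rightarrow> nat \<Rightarrow> 'n set \<Rightarrow> bool" where
  "norming_set u M W \<longleftrightarrow> inj_on (sampling W \<circ> bl_proj u M) (bl_space u M)"

text \<open>Operator norm of the inverse of S_W B_M restricted to B_M, on its image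
  S_W(B_M), w.r.t. the euclidean norm: sup of ||T^(-1) y|| over ||y|| <= 1.\<close>
definition norming_inv_norm :: "(nat \<Rightarrow> real^'n::finite) \<Rightarrow> nat \<Rightarrow> 'n set \<Rightarrow> real" where
  "norming_inv_norm u M W =
     Sup {norm (inv_into (bl_space u M) (sampling W \<circ> bl_proj u M) y) | y.
            y \<in> (sampling W \<circ> bl_proj u M) ` bl_space u M \<and> norm y \<le> 1}"

end

(* The error e = x - I_W x vanishes on W.  Split e = B_M e + r into its band-limited part and
   the tail r.  Since S_W (B_M e) = - S_W r, the norming-set inequality gives
   |B_M e| <= C |r| with C = |(S_W B_M)^-1|, so every entry of e is at most (1 + C) |r|.
   In the Fourier basis K_f is diagonal with positive weights f_k, hence comparing term by term
   |r|^2 = sum_(k>=M) e_k^2 <= (sum_(k>=M) f_k) |e|_K^2.  Finally the interpolant minimises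
   the native norm: it is K_f c with c supported on W, and the native inner product of e
   with K_f c is e . c = 0, so |e|_K <= |x|_K. *)

theory Submission
  imports Defs
begin

locale orthonormal_frame =
  fixes u :: "nat \<Rightarrow> real^'n::finite"
  assumes orthonormal: "\<forall>k<CARD('n). \<forall>l<CARD('n). u k \<bullet> u l = (if k = l then 1 else 0)"
begin

lemma inner_frame_sum:
  assumes "j < CARD('n)" and "S \<subseteq> {..<CARD('n)}"
  shows "u j \<bullet> (\<Sum>k\<in>S. a k *\<^sub>R u k) = (if j \<in> S then a j else 0)"
proof -
  have "u j \<bullet> (\<Sum>k\<in>S. a k *\<^sub>R u k) = (\<Sum>k\<in>S. if k = j then a k else 0)"
    unfolding inner_sum_right inner_scaleR_right
    by (rule sum.cong) (use assms orthonormal in auto)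
  also have "\<dots> = (if j \<in> S then a j else 0)"
    using finite_subset[OF assms(2)] by simp
  finally show ?thesis .
qed

lemma frame_expansion_span:
  assumes "m \<le> CARD('n)" and "y \<in> span (u ` {..<m})"
  shows "y = (\<Sum>k<m. (u k \<bullet> y) *\<^sub>R u k)"
proof -
  define r where "r = y - (\<Sum>k<m. (u k \<bullet> y) *\<^sub>R u k)"
  have "r \<in> span (u ` {..<m})"
    unfolding r_def by (intro span_diff assms(2) span_sum span_scale span_base) auto
  moreover have "orthogonal r (u j)" if "j < m" for j
  proof -
    have "u j \<bullet> r = 0"
      using inner_frame_sum[of j "{..<m}" "\<lambda>k. u k \<bullet> y"] that assms(1)
      by (simp add: r_def inner_diff_right)
    then show ?thesis
      by (simp add: orthogonal_def inner_commute)
  qed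
  ultimately have "orthogonal r r"
    using orthogonal_to_span by blast
  then show ?thesis
    by (simp add: r_def orthogonal_def)
qed

lemma span_frame_eq_UNIV: "span (u ` {..<CARD('n)}) = UNIV"
proof -
  have unit: "u k \<bullet> u k = 1" if "k < CARD('n)" for k
    using orthonormal that by simp
  have "inj_on u {..<CARD('n)}"
    by (rule inj_onI) (metis lessThan_iff orthonormal unit zero_neq_one)
  then have "card (u ` {..<CARD('n)}) = CARD('n)"
    by (simp add: card_image)
  moreover have "independent (u ` {..<CARD('n)})"
  proof (rule pairwise_orthogonal_independent)
    show "pairwise orthogonal (u ` {..<CARD('n)})"
      unfolding pairwise_def orthogonal_def using orthonormal by auto
    show "0 \<notin> u ` {..<CARD('n)}"
      using unit by force
  qed
  ultimately show ?thesis
    using card_ge_dim_independent[of "u ` {..<CARD('n)}" UNIV] by auto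
qed

lemma frame_expansion: "y = (\<Sum>k<CARD('n). (u k \<bullet> y) *\<^sub>R u k)"
  using frame_expansion_span[of "CARD('n)" y] span_frame_eq_UNIV by simp

lemma frame_parseval: "p \<bullet> q = (\<Sum>k<CARD('n). (u k \<bullet> p) * (u k \<bullet> q))"
proof -
  have "p \<bullet> q = (\<Sum>k<CARD('n). (u k \<bullet> p) *\<^sub>R u k) \<bullet> q"
    using frame_expansion[of p] by simp
  then show ?thesis
    by (simp add: inner_sum_left)
qed

lemma frame_norm_sq: "norm y ^ 2 = (\<Sum>k<CARD('n). (gft u y k)^2)"
proof -
  have "norm y ^ 2 = y \<bullet> y"
    by (simp add: power2_norm_eq_inner)
  then show ?thesis
    using frame_parseval[of y y] by (simp add: power2_eq_square gft_def)
qed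

lemma gft_conv:
  assumes "k < CARD('n)"
  shows "gft u (conv u f y) k = gft u f k * gft u y k"
  using inner_frame_sum[OF assms, of "{..<CARD('n)}"] assms
  by (simp add: gft_def conv_def)

lemma gft_bl_proj:
  assumes "k < CARD('n)" and "M \<le> CARD('n)"
  shows "gft u (bl_proj u M y) k = (if k < M then gft u y k else 0)"
  using inner_frame_sum[OF assms(1), of "{..<M}"] assms(2)
  by (simp add: gft_def bl_proj_def)

lemma bl_proj_eq_self:
  assumes "M \<le> CARD('n)" and "p \<in> bl_space u M"
  shows "bl_proj u M p = p"
  using frame_expansion_span assms unfolding bl_proj_def bl_space_def by simp

end

lemma kernel_mat_mult_eq_conv:
  fixes u :: "nat \<Rightarrow> real^'n::finite"
  shows "kernel_mat u f *v y = conv u f y"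
proof -
  have "(kernel_mat u f *v y) $ i = conv u f y $ i" for i
  proof -
    have "(kernel_mat u f *v y) $ i
        = (\<Sum>j\<in>UNIV. (\<Sum>k<CARD('n). u k $ j * (u k \<bullet> f) * u k $ i) * y $ j)"
      by (simp add: matrix_vector_mult_def kernel_mat_def conv_def gft_def sum_component inner_axis)
    also have "\<dots> = (\<Sum>k<CARD('n). (u k \<bullet> f) * u k $ i * (\<Sum>j\<in>UNIV. u k $ j * y $ j))"
      unfolding sum_distrib_left sum_distrib_right by (subst sum.swap) (simp add: mult_ac)
    also have "\<dots> = conv u f y $ i"
      by (simp add: conv_def gft_def inner_vec_def sum_component mult_ac)
    finally show ?thesis .
  qed
  then show ?thesis
    by (simp add: vec_eq_iff)
qed

lemma kernel_mat_mult_supported: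
  assumes "\<forall>v. v \<notin> W \<longrightarrow> c $ v = 0"
  shows "(kernel_mat u f *v c) $ i = (\<Sum>w\<in>W. c $ w * conv u (axis w 1) f $ i)"
proof -
  have "(kernel_mat u f *v c) $ i = (\<Sum>w\<in>UNIV. c $ w * conv u (axis w 1) f $ i)"
    by (simp add: matrix_vector_mult_def kernel_mat_def mult.commute)
  also have "\<dots> = (\<Sum>w\<in>W. c $ w * conv u (axis w 1) f $ i)"
    by (rule sum.mono_neutral_right) (use assms in auto)
  finally show ?thesis .
qed

lemma linear_sampling: "linear (sampling W)"
  by (rule linearI) (auto simp: sampling_def vec_eq_iff)

lemma linear_bl_proj: "linear (bl_proj u M)"
  by (rule linearI)
    (auto simp: bl_proj_def inner_add_right scaleR_add_left sum.distrib scaleR_sum_right)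

lemma bl_proj_in_bl_space: "bl_proj u M y \<in> bl_space u M"
  unfolding bl_proj_def bl_space_def by (intro span_sum span_scale span_base) auto

lemma sampling_eq_self: "\<forall>v. v \<notin> W \<longrightarrow> y $ v = 0 \<Longrightarrow> sampling W y = y"
  by (simp add: sampling_def vec_eq_iff)

lemma norm_sampling_le: "norm (sampling W y) \<le> norm y"
  by (rule norm_le_componentwise_cart) (simp add: sampling_def)

lemma matrix_inv_left:
  fixes A :: "'a::semiring_1^'n^'m"
  assumes "invertible A"
  shows "matrix_inv A ** A = mat 1"
  using assms unfolding invertible_def matrix_inv_def by (rule someI2_ex) blast

definition inverse_norm_on :: "'a::real_normed_vector set \<Rightarrow> ('a \<Rightarrow> 'b::real_normed_vector) \<Rightarrow> real"
  where "inverse_norm_on B T = Sup {norm (inv_into B T y) | y. y \<in> T ` B \<and> norm y \<le> 1}"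

lemma norming_inv_norm_eq_inverse_norm_on:
  "norming_inv_norm u M W = inverse_norm_on (bl_space u M) (sampling W \<circ> bl_proj u M)"
  by (simp add: norming_inv_norm_def inverse_norm_on_def)

lemma bdd_above_inverse_norms:
  fixes T :: "'a::euclidean_space \<Rightarrow> 'b::euclidean_space"
  assumes "linear T" and "subspace B" and "inj_on T B"
  shows "bdd_above {norm (inv_into B T y) | y. y \<in> T ` B \<and> norm y \<le> 1}"
proof -
  have "\<forall>x\<in>B. T x = 0 \<longrightarrow> x = 0"
    using assms by (metis inj_on_def linear_0 subspace_0)
  then obtain e where "e > 0" and e: "\<forall>x\<in>B. e * norm x \<le> norm (T x)"
    using injective_imp_isometric[of B T] assms closed_subspace linear_conv_bounded_linear
    by blast
  have "norm p \<le> 1 / e" if "p \<in> B" and "norm (T p) \<le> 1" for p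
    using e that \<open>e > 0\<close> by (force simp: field_simps)
  then show ?thesis
    using assms(3) by (intro bdd_aboveI[of _ "1 / e"]) auto
qed

lemma inverse_norm_on_nonneg:
  fixes T :: "'a::euclidean_space \<Rightarrow> 'b::euclidean_space"
  assumes "linear T" and "subspace B" and "inj_on T B"
  shows "0 \<le> inverse_norm_on B T"
proof -
  have "T 0 = 0" and "0 \<in> B"
    using assms by (simp_all add: linear_0 subspace_0)
  then have "0 \<in> {norm (inv_into B T y) | y. y \<in> T ` B \<and> norm y \<le> 1}"
    using inv_into_f_f[OF assms(3), of 0] by force
  then show ?thesis
    unfolding inverse_norm_on_def using bdd_above_inverse_norms[OF assms] by (rule cSup_upper)
qed

lemma norm_le_inverse_norm_on:
  fixes T :: "'a::euclidean_space \<Rightarrow> 'b::euclidean_space"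
  assumes "linear T" and "subspace B" and "inj_on T B" and "p \<in> B"
  shows "norm p \<le> inverse_norm_on B T * norm (T p)"
proof (cases "T p = 0")
  case True
  then have "p = 0"
    using assms by (metis inj_on_def linear_0 subspace_0)
  then show ?thesis
    using inverse_norm_on_nonneg[OF assms(1-3)] by simp
next
  case False
  define q where "q = p /\<^sub>R norm (T p)"
  have "q \<in> B"
    unfolding q_def using assms(2,4) by (rule subspace_scale)
  moreover have "norm (T q) = 1"
    using False by (simp add: q_def linear_scale[OF assms(1)])
  ultimately have "norm (inv_into B T (T q)) \<in> {norm (inv_into B T y) | y. y \<in> T ` B \<and> norm y \<le> 1}"
    by auto
  then have "norm q \<le> inverse_norm_on B T"
    unfolding inverse_norm_on_def inv_into_f_f[OF assms(3) \<open>q \<in> B\<close>]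
    using bdd_above_inverse_norms[OF assms(1-3)] by (rule cSup_upper)
  then show ?thesis
    using False by (simp add: q_def field_simps)
qed

context orthonormal_frame
begin

lemma norming_set_bound:
  assumes "norming_set u M W" and "M \<le> CARD('n)" and "p \<in> bl_space u M"
  shows "norm p \<le> norming_inv_norm u M W * norm (sampling W p)"
proof -
  have "norm p \<le> norming_inv_norm u M W * norm ((sampling W \<circ> bl_proj u M) p)"
    unfolding norming_inv_norm_eq_inverse_norm_on
    using assms(1,3) linear_compose[OF linear_bl_proj linear_sampling]
    by (intro norm_le_inverse_norm_on) (auto simp: norming_set_def bl_space_def)
  then show ?thesis
    using bl_proj_eq_self[OF assms(2,3)] by simp
qed

lemma norming_inv_norm_nonneg:
  assumes "norming_set u M W"
  shows "0 \<le> norming_inv_norm u M W"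
  unfolding norming_inv_norm_eq_inverse_norm_on
  using assms linear_compose[OF linear_bl_proj linear_sampling]
  by (intro inverse_norm_on_nonneg) (auto simp: norming_set_def bl_space_def)

lemma abs_le_norming_bound:
  assumes "norming_set u M W" and "M \<le> CARD('n)" and "\<forall>w\<in>W. e $ w = 0"
  shows "\<bar>e $ v\<bar> \<le> (1 + norming_inv_norm u M W) * norm (e - bl_proj u M e)"
proof -
  define P where "P = bl_proj u M e"
  define r where "r = e - P"
  have "sampling W P = - sampling W r"
    using assms(3) by (simp add: vec_eq_iff sampling_def r_def)
  then have "norm P \<le> norming_inv_norm u M W * norm r"
    using norming_set_bound[OF assms(1,2) bl_proj_in_bl_space, of e]
      norm_sampling_le[of W r] norming_inv_norm_nonneg[OF assms(1)]
    by (simp add: P_def) (meson mult_left_mono order_trans)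
  moreover have "\<bar>e $ v\<bar> \<le> norm P + norm r"
    using abs_triangle_ineq[of "P $ v" "r $ v"] component_le_norm_cart[of P v]
      component_le_norm_cart[of r v]
    by (simp add: r_def)
  ultimately show ?thesis
    by (simp add: r_def P_def algebra_simps)
qed

end

locale pos_def_kernel = orthonormal_frame u for u :: "nat \<Rightarrow> real^'n::finite" +
  fixes f :: "real^'n"
  assumes pos_def: "pos_def_fun u f"
begin

lemma inner_kernel_mat_pos: "y \<noteq> 0 \<Longrightarrow> 0 < y \<bullet> (kernel_mat u f *v y)"
  using pos_def by (simp add: pos_def_fun_def)

lemma gft_kernel_pos:
  assumes "k < CARD('n)"
  shows "0 < gft u f k"
proof -
  have "gft u (u k) k = 1"
    using orthonormal assms by (simp add: gft_def)
  then have "u k \<noteq> 0"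
    by (auto simp: gft_def)
  then have "0 < u k \<bullet> conv u f (u k)"
    using inner_kernel_mat_pos by (simp add: kernel_mat_mult_eq_conv)
  also have "\<dots> = gft u f k"
    using gft_conv[OF assms] \<open>gft u (u k) k = 1\<close> by (simp add: gft_def)
  finally show ?thesis .
qed

lemma matrix_inv_kernel_mat: "matrix_inv (kernel_mat u f) *v (kernel_mat u f *v y) = y"
proof -
  have "inj ((*v) (kernel_mat u f))"
    unfolding linear_injective_0[OF matrix_vector_mul_linear]
    using inner_kernel_mat_pos by fastforce
  then obtain B where "B ** kernel_mat u f = mat 1"
    using matrix_left_invertible_injective by blast
  then have "invertible (kernel_mat u f)"
    using invertible_left_inverse by blast
  then have "matrix_inv (kernel_mat u f) ** kernel_mat u f = mat 1"
    by (simp add: matrix_inv_left)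
  then show ?thesis
    by (simp add: matrix_vector_mul_assoc)
qed

lemma native_norm_spectral:
  "native_norm u f y = sqrt (\<Sum>k<CARD('n). (gft u y k)^2 / gft u f k)"
proof -
  define g where "g = (\<Sum>k<CARD('n). (gft u y k / gft u f k) *\<^sub>R u k)"
  have gft_g: "gft u g k = gft u y k / gft u f k" if "k < CARD('n)" for k
    using inner_frame_sum[OF that, of "{..<CARD('n)}"] that by (simp add: g_def gft_def)
  have "kernel_mat u f *v g = (\<Sum>k<CARD('n). (gft u f k * gft u g k) *\<^sub>R u k)"
    by (simp add: kernel_mat_mult_eq_conv conv_def)
  also have "\<dots> = (\<Sum>k<CARD('n). (gft u y k) *\<^sub>R u k)"
  proof (rule sum.cong)
    fix k assume "k \<in> {..<CARD('n)}"
    then have "gft u f k \<noteq> 0" and "k < CARD('n)"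
      using gft_kernel_pos by force+
    then show "(gft u f k * gft u g k) *\<^sub>R u k = gft u y k *\<^sub>R u k"
      by (simp add: gft_g)
  qed simp
  also have "\<dots> = y"
    using frame_expansion[of y] by (simp add: gft_def)
  finally have "matrix_inv (kernel_mat u f) *v y = g"
    using matrix_inv_kernel_mat[of g] by simp
  then have "y \<bullet> (matrix_inv (kernel_mat u f) *v y) = (\<Sum>k<CARD('n). gft u y k * gft u g k)"
    using frame_parseval[of y g] by (simp add: gft_def)
  also have "\<dots> = (\<Sum>k<CARD('n). (gft u y k)^2 / gft u f k)"
    by (rule sum.cong) (simp_all add: gft_g power2_eq_square)
  finally show ?thesis
    by (simp add: native_norm_def)
qed

lemma supported_kernel_eq_zero:
  assumes "\<forall>v. v \<notin> W \<longrightarrow> d $ v = 0" and "\<forall>w\<in>W. (kernel_mat u f *v d) $ w = 0"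
  shows "d = 0"
proof -
  have "d \<bullet> (kernel_mat u f *v d) = (\<Sum>i\<in>UNIV. d $ i * (kernel_mat u f *v d) $ i)"
    by (simp add: inner_vec_def)
  also have "\<dots> = 0"
    by (rule sum.neutral) (use assms in auto)
  finally show ?thesis
    using inner_kernel_mat_pos[of d] by auto
qed

lemma kernel_interpolation_solvable:
  "\<exists>c. (\<forall>v. v \<notin> W \<longrightarrow> c $ v = 0) \<and> (\<forall>w\<in>W. (kernel_mat u f *v c) $ w = x $ w)"
proof -
  \<comment> \<open>T is K_(f,W) on the coordinates in W and the identity elsewhere, so injectivity
    (from positive definiteness) yields solvability.\<close>
  define T where "T d = sampling W (kernel_mat u f *v sampling W d) + (d - sampling W d)" for d
  have T_out: "T d $ v = d $ v" if "v \<notin> W" for d v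
    using that by (simp add: T_def sampling_def)
  have T_in: "T d $ w = (kernel_mat u f *v sampling W d) $ w" if "w \<in> W" for d w
    using that by (simp add: T_def sampling_def)
  have "linear (sampling W \<circ> ((*v) (kernel_mat u f) \<circ> sampling W))"
    using linear_sampling matrix_vector_mul_linear by (intro linear_compose)
  then have "linear T"
    unfolding T_def o_def by (intro linear_compose_add linear_compose_sub linear_ident linear_sampling)
  moreover have "d = 0" if "T d = 0" for d
  proof (rule supported_kernel_eq_zero)
    show supp: "\<forall>v. v \<notin> W \<longrightarrow> d $ v = 0"
      using that T_out by (metis zero_index)
    show "\<forall>w\<in>W. (kernel_mat u f *v d) $ w = 0"
      using that T_in[of _ d] by (simp add: sampling_eq_self[OF supp])
  qed
  ultimately have "surj T"
    by (simp add: linear_injective_0 linear_injective_imp_surjective)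
  then obtain c where c: "T c = sampling W x"
    by (metis surjD)
  have supp: "\<forall>v. v \<notin> W \<longrightarrow> c $ v = 0"
    using c T_out[of _ c] by (simp add: sampling_def)
  moreover have "(kernel_mat u f *v c) $ w = x $ w" if "w \<in> W" for w
  proof -
    have "(kernel_mat u f *v c) $ w = T c $ w"
      using T_in[OF that] sampling_eq_self[OF supp] by simp
    also have "\<dots> = x $ w"
      using c that by (simp add: sampling_def)
    finally show ?thesis .
  qed
  ultimately show ?thesis
    by blast
qed

lemma gbf_interp_eq_kernel_mat:
  assumes supp: "\<forall>v. v \<notin> W \<longrightarrow> c $ v = 0"
    and interp: "\<forall>w\<in>W. (kernel_mat u f *v c) $ w = x $ w"
  shows "gbf_interp u f W x = kernel_mat u f *v c"
proof -
  have "gbf_coeffs u f W x = ($) c"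
    unfolding gbf_coeffs_def
  proof (rule the_equality)
    show "(\<forall>v. v \<notin> W \<longrightarrow> c $ v = 0) \<and>
        (\<forall>w'\<in>W. (\<Sum>w\<in>W. c $ w * conv u (axis w 1) f $ w') = x $ w')"
      using assms kernel_mat_mult_supported[OF supp] by simp
  next
    fix c' assume c': "(\<forall>v. v \<notin> W \<longrightarrow> c' v = 0) \<and>
        (\<forall>w'\<in>W. (\<Sum>w\<in>W. c' w * conv u (axis w 1) f $ w') = x $ w')"
    have supp': "\<forall>v. v \<notin> W \<longrightarrow> vec_lambda c' $ v = 0"
      using c' by simp
    have "vec_lambda c' - c = 0"
    proof (rule supported_kernel_eq_zero)
      show "\<forall>v. v \<notin> W \<longrightarrow> (vec_lambda c' - c) $ v = 0"
        using supp supp' by simp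
      show "\<forall>w\<in>W. (kernel_mat u f *v (vec_lambda c' - c)) $ w = 0"
        using c' interp kernel_mat_mult_supported[OF supp']
        by (simp add: matrix_vector_mult_diff_distrib)
    qed
    then show "c' = ($) c"
      by (auto simp: vec_eq_iff)
  qed
  then show ?thesis
    by (simp add: vec_eq_iff gbf_interp_def sum_component kernel_mat_mult_supported[OF supp])
qed

lemma interp_error_vanishes:
  "\<forall>w\<in>W. (x - gbf_interp u f W x) $ w = 0"
  using kernel_interpolation_solvable[of W x] gbf_interp_eq_kernel_mat by auto

lemma native_norm_le_add_kernel:
  assumes "\<forall>v. v \<notin> W \<longrightarrow> c $ v = 0" and "\<forall>w\<in>W. e $ w = 0"
  shows "native_norm u f e \<le> native_norm u f (e + kernel_mat u f *v c)"
proof -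
  have "e \<bullet> c = 0"
    unfolding inner_vec_def using assms by (intro sum.neutral) auto
  then have cross: "(\<Sum>k<CARD('n). gft u e k * gft u c k) = 0"
    using frame_parseval[of e c] by (simp add: gft_def)
  have "(\<Sum>k<CARD('n). (gft u e k)^2 / gft u f k)
      = (\<Sum>k<CARD('n). (gft u e k)^2 / gft u f k + 2 * (gft u e k * gft u c k))"
    using cross by (simp add: sum.distrib sum_distrib_left[symmetric])
  also have "\<dots> \<le> (\<Sum>k<CARD('n). (gft u (e + kernel_mat u f *v c) k)^2 / gft u f k)"
  proof (rule sum_mono)
    fix k assume "k \<in> {..<CARD('n)}"
    then have k: "k < CARD('n)" and pos: "0 < gft u f k"
      using gft_kernel_pos by auto
    have "gft u (e + kernel_mat u f *v c) k = gft u e k + gft u f k * gft u c k"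
      using gft_conv[OF k] by (simp add: kernel_mat_mult_eq_conv gft_def inner_add_right)
    moreover have "(a + gft u f k * b)^2 / gft u f k = a^2 / gft u f k + 2 * (a * b) + gft u f k * b^2"
      for a b
      using pos by (simp add: field_simps power2_eq_square)
    ultimately show "(gft u e k)^2 / gft u f k + 2 * (gft u e k * gft u c k)
        \<le> (gft u (e + kernel_mat u f *v c) k)^2 / gft u f k"
      using pos by simp
  qed
  finally show ?thesis
    by (simp add: native_norm_spectral)
qed

lemma native_norm_interp_error_le:
  "native_norm u f (x - gbf_interp u f W x) \<le> native_norm u f x"
proof -
  obtain c where supp: "\<forall>v. v \<notin> W \<longrightarrow> c $ v = 0"
    and interp: "\<forall>w\<in>W. (kernel_mat u f *v c) $ w = x $ w"
    using kernel_interpolation_solvable by blast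
  have "native_norm u f (x - gbf_interp u f W x)
      \<le> native_norm u f ((x - gbf_interp u f W x) + kernel_mat u f *v c)"
    using supp interp_error_vanishes by (rule native_norm_le_add_kernel)
  then show ?thesis
    by (simp add: gbf_interp_eq_kernel_mat[OF supp interp])
qed

lemma tail_sum_gft_kernel_nonneg: "0 \<le> (\<Sum>k\<in>{M..<CARD('n)}. gft u f k)"
  using gft_kernel_pos by (intro sum_nonneg) (auto intro: less_imp_le)

lemma norm_bl_tail_le:
  assumes "M \<le> CARD('n)"
  shows "norm (y - bl_proj u M y) \<le> sqrt (\<Sum>k\<in>{M..<CARD('n)}. gft u f k) * native_norm u f y"
proof -
  define S where "S = (\<Sum>k\<in>{M..<CARD('n)}. gft u f k)"
  have Q_nonneg: "0 \<le> (\<Sum>k<CARD('n). (gft u y k)^2 / gft u f k)"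
    using gft_kernel_pos by (intro sum_nonneg) (simp add: less_imp_le)
  have "norm (y - bl_proj u M y) ^ 2 = (\<Sum>k<CARD('n). (if k < M then 0 else gft u y k)^2)"
    unfolding frame_norm_sq
    using gft_bl_proj[OF _ assms] by (intro sum.cong) (auto simp: gft_def inner_diff_right)
  also have "\<dots> \<le> (\<Sum>k<CARD('n). S * ((gft u y k)^2 / gft u f k))"
  proof (rule sum_mono)
    fix k assume "k \<in> {..<CARD('n)}"
    then have pos: "0 < gft u f k" and "k < CARD('n)"
      using gft_kernel_pos by auto
    have "gft u f k \<le> S" if "M \<le> k"
      unfolding S_def using that \<open>k < CARD('n)\<close> gft_kernel_pos
      by (intro member_le_sum) (auto intro: less_imp_le)
    moreover have "0 \<le> S"
      unfolding S_def by (rule tail_sum_gft_kernel_nonneg)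
    ultimately show "(if k < M then 0 else gft u y k)^2 \<le> S * ((gft u y k)^2 / gft u f k)"
      using pos by (auto simp: field_simps intro: mult_right_mono)
  qed
  also have "\<dots> = S * (\<Sum>k<CARD('n). (gft u y k)^2 / gft u f k)"
    by (simp add: sum_distrib_left)
  also have "\<dots> = (sqrt S * native_norm u f y)^2"
    using Q_nonneg tail_sum_gft_kernel_nonneg
    by (simp add: S_def native_norm_spectral power_mult_distrib)
  finally have "norm (y - bl_proj u M y) ^ 2 \<le> (sqrt S * native_norm u f y)^2" .
  moreover have "0 \<le> sqrt S * native_norm u f y"
    using Q_nonneg tail_sum_gft_kernel_nonneg by (simp add: S_def native_norm_spectral)
  ultimately show ?thesis
    unfolding S_def by (rule power2_le_imp_le)
qed

end

theorem theorem7: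
  fixes A :: "real^'n::finite^'n" and u :: "nat \<Rightarrow> real^'n" and lam :: "nat \<Rightarrow> real"
    and f x :: "real^'n" and W :: "'n set" and M :: nat
  assumes "graph_eigensystem A u lam"
    and "pos_def_fun u f"
    and "M \<le> CARD('n)"
    and "norming_set u M W"
  shows "(MAX v. \<bar>x $ v - gbf_interp u f W x $ v\<bar>)
           \<le> (1 + norming_inv_norm u M W) * sqrt (\<Sum>k\<in>{M..<CARD('n)}. gft u f k)
              * native_norm u f x"
proof -
  interpret pos_def_kernel u f
    using assms(1,2) by unfold_locales (simp_all add: graph_eigensystem_def)
  define e where "e = x - gbf_interp u f W x"
  have "\<bar>e $ v\<bar> \<le> (1 + norming_inv_norm u M W) * sqrt (\<Sum>k\<in>{M..<CARD('n)}. gft u f k)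
           * native_norm u f x" for v
  proof -
    have "\<bar>e $ v\<bar> \<le> (1 + norming_inv_norm u M W) * norm (e - bl_proj u M e)"
      using assms(3,4) interp_error_vanishes unfolding e_def by (intro abs_le_norming_bound)
    also have "\<dots> \<le> (1 + norming_inv_norm u M W)
        * (sqrt (\<Sum>k\<in>{M..<CARD('n)}. gft u f k) * native_norm u f e)"
      using norm_bl_tail_le[OF assms(3)] norming_inv_norm_nonneg[OF assms(4)]
      by (intro mult_left_mono) auto
    also have "\<dots> \<le> (1 + norming_inv_norm u M W)
        * (sqrt (\<Sum>k\<in>{M..<CARD('n)}. gft u f k) * native_norm u f x)"
      using native_norm_interp_error_le norming_inv_norm_nonneg[OF assms(4)]
        tail_sum_gft_kernel_nonneg
      unfolding e_def by (intro mult_left_mono) auto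
    finally show ?thesis
      by (simp add: mult.assoc)
  qed
  then show ?thesis
    unfolding e_def by (intro Max.boundedI) auto
qed

end
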